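(* Let $r\ge 1$ and let $G$ be a simple $r$-regular graph that has a perfect $K_{1,r}$-packing, i.e. a spanning subgraph each of whose connected components is isomorphic to the star $K_{1,r}$. Then $-1$ is an eigenvalue of the adjacency matrix of $G$. *)

theory Defs
  imports "Jordan_Normal_Form.Char_Poly"
begin

definition simple_graph :: "nat \<Rightarrow> (nat \<Rightarrow> nat \<Rightarrow> bool) \<Rightarrow> bool" where
  "simple_graph n E \<longleftrightarrow>
     (\<forall>u v. E u v \<longrightarrow> u < n \<and> v < n) \<and>
     (\<forall>u v. E u v \<longrightarrow> E v u) \<and>
     (\<forall>v. \<not> E v v)"

definition regular_graph :: "nat \<Rightarrow> (nat \<Rightarrow> nat \<Rightarrow> bool) \<Rightarrow> nat \<Rightarrow> bool" where
  "regular_graph n E r \<longleftrightarrow> (\<forall>v<n. card {u. u < n \<and> E v u} = r)"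

definition adjacency_matrix :: "nat \<Rightarrow> (nat \<Rightarrow> nat \<Rightarrow> bool) \<Rightarrow> real mat" where
  "adjacency_matrix n E = mat n n (\<lambda>(i, j). if E i j then 1 else 0)"

text \<open>The star K_{1,r} on vertex set {0..r}, with centre 0.\<close>
definition star_edge :: "nat \<Rightarrow> nat \<Rightarrow> bool" where
  "star_edge i j \<longleftrightarrow> (i = 0 \<and> j \<noteq> 0) \<or> (j = 0 \<and> i \<noteq> 0)"

definition component :: "(nat \<Rightarrow> nat \<Rightarrow> bool) \<Rightarrow> nat \<Rightarrow> nat set" where
  "component H v = {u. H\<^sup>*\<^sup>* v u}"

definition perfect_star_packing :: "nat \<Rightarrow> (nat \<Rightarrow> nat \<Rightarrow> bool) \<Rightarrow> nat \<Rightarrow> bool" where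
  "perfect_star_packing n E r \<longleftrightarrow>
     (\<exists>H. (\<forall>u v. H u v \<longrightarrow> E u v) \<and> (\<forall>u v. H u v \<longrightarrow> H v u) \<and>
          (\<forall>v<n. \<exists>f. bij_betw f (component H v) {0..r} \<and>
                 (\<forall>x\<in>component H v. \<forall>y\<in>component H v. H x y \<longleftrightarrow> star_edge (f x) (f y))))"

end

theory Submission
  imports Defs
begin

(* Weight every star centre by -r and every leaf by 1. By regularity a centre has no neighbours
   besides its own r leaves, so its neighbours sum to r. A leaf is adjacent to its own centre and,
   since no other centre has neighbours outside its star, otherwise only to leaves: its r neighbours
   sum to -r + (r - 1) = -1. Hence the weight vector is an eigenvector for -1. *)

lemma adjacency_matrix_mult_vec:
  assumes "i < n"
  shows "(adjacency_matrix n E *\<^sub>v vec n x) $ i = (\<Sum>j | j < n \<and> E i j. x j)"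
proof -
  have "(adjacency_matrix n E *\<^sub>v vec n x) $ i = (\<Sum>j<n. (if E i j then 1 else 0) * x j)"
    using assms by (simp add: adjacency_matrix_def scalar_prod_def lessThan_atLeast0)
  also have "\<dots> = (\<Sum>j | j < n \<and> E i j. x j)"
    by (simp add: sum.inter_filter[symmetric] if_distrib[of "\<lambda>c. c * _"] cong: if_cong)
  finally show ?thesis .
qed

lemma eigenvalue_adjacency_matrixI:
  assumes "v < n" and "x v \<noteq> 0"
    and "\<And>i. i < n \<Longrightarrow> (\<Sum>j | j < n \<and> E i j. x j) = \<mu> * x i"
  shows "eigenvalue (adjacency_matrix n E) \<mu>"
proof -
  have "adjacency_matrix n E *\<^sub>v vec n x = \<mu> \<cdot>\<^sub>v vec n x"
    using assms(3) by (intro eq_vecI) (simp_all add: adjacency_matrix_mult_vec, simp add: adjacency_matrix_def)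
  moreover have "vec n x \<noteq> 0\<^sub>v n"
    using assms(1,2) by (metis index_vec index_zero_vec(1))
  ultimately show ?thesis
    unfolding eigenvalue_def eigenvector_def by (metis adjacency_matrix_def dim_row_mat(1) vec_carrier)
qed

lemma self_in_component: "v \<in> component H v"
  by (simp add: component_def)

lemma component_eq:
  assumes "symp H" and "u \<in> component H v"
  shows "component H u = component H v"
proof -
  have "H\<^sup>*\<^sup>* v u" and "H\<^sup>*\<^sup>* u v"
    using assms sympD[OF symp_rtranclp[OF assms(1)]] by (auto simp: component_def)
  then show ?thesis
    by (auto simp: component_def intro: rtranclp_trans)
qed

lemma component_subset:
  assumes "\<And>u w. H u w \<Longrightarrow> w \<in> A" and "v \<in> A"
  shows "component H v \<subseteq> A"
proof
  fix u assume "u \<in> component H v"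
  then have "H\<^sup>*\<^sup>* v u" by (simp add: component_def)
  then show "u \<in> A"
    by (induction rule: rtranclp_induct) (use assms in auto)
qed

(* The choice depends on the vertex set alone, so all vertices of one star agree on its centre
   (for r = 1 either end of an edge would do). *)
definition star_centre :: "('a \<Rightarrow> 'a \<Rightarrow> bool) \<Rightarrow> 'a set \<Rightarrow> 'a" where
  "star_centre H S = (SOME c. c \<in> S \<and> (\<forall>u \<in> S - {c}. H c u))"

lemma
  assumes bij: "bij_betw f S {0..r}" and star: "\<forall>x\<in>S. \<forall>y\<in>S. H x y \<longleftrightarrow> star_edge (f x) (f y)"
  shows star_centre_in: "star_centre H S \<in> S"
    and star_centre_adjacent: "u \<in> S - {star_centre H S} \<Longrightarrow> H (star_centre H S) u"
proof -
  obtain c where c: "c \<in> S" "f c = 0"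
    using bij by (metis atLeastAtMost_iff bij_betw_iff_bijections le0)
  have "H c u" if "u \<in> S - {c}" for u
  proof -
    have "f u \<noteq> 0"
      using bij c that by (metis DiffE bij_betw_iff_bijections singletonI)
    then show ?thesis
      using star c that by (simp add: star_edge_def)
  qed
  then have "\<exists>c. c \<in> S \<and> (\<forall>u \<in> S - {c}. H c u)"
    using c(1) by blast
  from someI_ex[OF this] show "star_centre H S \<in> S" and "u \<in> S - {star_centre H S} \<Longrightarrow> H (star_centre H S) u"
    unfolding star_centre_def by blast+
qed

(* c sends every vertex to the centre of its star; the neighbourhood of a centre is its star. *)
definition star_centre_map :: "nat \<Rightarrow> (nat \<Rightarrow> nat \<Rightarrow> bool) \<Rightarrow> (nat \<Rightarrow> nat) \<Rightarrow> bool" where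
  "star_centre_map n E c \<longleftrightarrow>
     (\<forall>v<n. c v = v \<longrightarrow> {u. u < n \<and> E v u} = {u. u < n \<and> u \<noteq> v \<and> c u = v}) \<and>
     (\<forall>v<n. c v \<noteq> v \<longrightarrow> E v (c v) \<and> c (c v) = c v)"

locale star_packing =
  fixes n r :: nat and E H :: "nat \<Rightarrow> nat \<Rightarrow> bool"
  assumes simple: "simple_graph n E" and regular: "regular_graph n E r"
    and sub: "\<And>u v. H u v \<Longrightarrow> E u v" and sym: "symp H"
    and stars: "\<And>v. v < n \<Longrightarrow> \<exists>f. bij_betw f (component H v) {0..r} \<and>
       (\<forall>x\<in>component H v. \<forall>y\<in>component H v. H x y \<longleftrightarrow> star_edge (f x) (f y))"
begin

definition centre :: "nat \<Rightarrow> nat" where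
  "centre v = star_centre H (component H v)"

lemma centre_in_component: "v < n \<Longrightarrow> centre v \<in> component H v"
  and centre_adjacent: "v < n \<Longrightarrow> u \<in> component H v - {centre v} \<Longrightarrow> H (centre v) u"
  and card_component: "v < n \<Longrightarrow> card (component H v) = Suc r"
proof -
  assume v: "v < n"
  obtain f where f: "bij_betw f (component H v) {0..r}"
    and "\<forall>x\<in>component H v. \<forall>y\<in>component H v. H x y \<longleftrightarrow> star_edge (f x) (f y)"
    using stars[OF v] by blast
  from star_centre_in[OF this] star_centre_adjacent[OF this] show "centre v \<in> component H v"
    and "u \<in> component H v - {centre v} \<Longrightarrow> H (centre v) u"
    unfolding centre_def by blast+
  show "card (component H v) = Suc r"
    using bij_betw_same_card[OF f] by simp
qed

lemma component_lessThan: "v < n \<Longrightarrow> component H v \<subseteq> {..<n}"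
  using simple sub by (intro component_subset) (auto simp: simple_graph_def)

lemma centre_eq: "u \<in> component H v \<Longrightarrow> centre u = centre v"
  using component_eq[OF sym] by (simp add: centre_def)

lemma centre_neighbours:
  assumes v: "v < n" "centre v = v"
  shows "{u. u < n \<and> E v u} = {u. u < n \<and> u \<noteq> v \<and> centre u = v}"
proof -
  have fibre: "{u. u < n \<and> u \<noteq> v \<and> centre u = v} = component H v - {v}"
  proof (intro equalityI subsetI)
    fix u assume u: "u \<in> {u. u < n \<and> u \<noteq> v \<and> centre u = v}"
    then have "v \<in> component H u" using centre_in_component[of u] by auto
    then show "u \<in> component H v - {v}"
      using u component_eq[OF sym] self_in_component by blast
  next
    fix u assume "u \<in> component H v - {v}"
    then show "u \<in> {u. u < n \<and> u \<noteq> v \<and> centre u = v}"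
      using v component_lessThan centre_eq by auto
  qed
  have "component H v - {v} \<subseteq> {u. u < n \<and> E v u}"
    using v centre_adjacent component_lessThan sub by fastforce
  moreover have "card (component H v - {v}) = card {u. u < n \<and> E v u}"
    using v regular card_component component_lessThan self_in_component
    by (simp add: regular_graph_def finite_subset)
  ultimately have "component H v - {v} = {u. u < n \<and> E v u}"
    by (rule card_subset_eq[rotated]) simp
  then show ?thesis
    using fibre by simp
qed

lemma leaf_adjacent_centre:
  assumes v: "v < n" "centre v \<noteq> v"
  shows "E v (centre v) \<and> centre (centre v) = centre v"
proof -
  have "H (centre v) v"
    using centre_adjacent[OF v(1), of v] self_in_component[of v H] v(2) by auto
  then have "H v (centre v)"
    by (rule sympD[OF sym])
  then show ?thesis
    using sub centre_eq[OF centre_in_component[OF v(1)]] by blast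
qed

lemma star_centre_map_centre: "star_centre_map n E centre"
  unfolding star_centre_map_def using centre_neighbours leaf_adjacent_centre by blast

end

lemma perfect_star_packing_star_centre_map:
  assumes "simple_graph n E" and "regular_graph n E r" and "perfect_star_packing n E r"
  shows "\<exists>c. star_centre_map n E c"
proof -
  obtain H where "\<And>u v. H u v \<Longrightarrow> E u v" and "\<And>u v. H u v \<Longrightarrow> H v u"
    and "\<And>v. v < n \<Longrightarrow> \<exists>f. bij_betw f (component H v) {0..r} \<and>
       (\<forall>x\<in>component H v. \<forall>y\<in>component H v. H x y \<longleftrightarrow> star_edge (f x) (f y))"
    using assms(3) unfolding perfect_star_packing_def by blast
  then interpret star_packing n r E H
    using assms(1,2) by unfold_locales (auto intro: sympI)
  show ?thesis
    using star_centre_map_centre by blast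
qed

lemma star_centre_map_weights_neighbour_sum:
  assumes "simple_graph n E" and "regular_graph n E r" and "star_centre_map n E c" and v: "v < n"
  defines "x \<equiv> \<lambda>u. if c u = u then - real r else 1"
  shows "(\<Sum>u | u < n \<and> E v u. x u) = - x v"
proof -
  have centre: "\<And>v. v < n \<Longrightarrow> c v = v \<Longrightarrow> {u. u < n \<and> E v u} = {u. u < n \<and> u \<noteq> v \<and> c u = v}"
    and leaf: "\<And>v. v < n \<Longrightarrow> c v \<noteq> v \<Longrightarrow> E v (c v) \<and> c (c v) = c v"
    using assms(3) by (simp_all add: star_centre_map_def)
  define N where "N = {u. u < n \<and> E v u}"
  have finN: "finite N" and cardN: "card N = r"
    using assms(2) v by (simp_all add: N_def regular_graph_def)
  show ?thesis
  proof (cases "c v = v")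
    case True
    have "(\<Sum>u\<in>N. x u) = (\<Sum>u\<in>N. 1)"
      using centre[OF v True] by (intro sum.cong) (auto simp: N_def x_def)
    then show ?thesis
      using cardN True by (simp add: N_def x_def)
  next
    case False
    have Esym: "\<And>u w. E u w \<Longrightarrow> E w u" and Elt: "\<And>u w. E u w \<Longrightarrow> w < n"
      using assms(1) by (auto simp: simple_graph_def)
    have cN: "c v \<in> N"
      using leaf[OF v False] Elt[of v "c v"] by (simp add: N_def)
    have "c u \<noteq> u" if u: "u \<in> N - {c v}" for u
    proof
      assume "c u = u"
      moreover have "u < n" and "v \<in> {w. w < n \<and> E u w}"
        using u v Esym by (auto simp: N_def)
      ultimately have "v \<in> {w. w < n \<and> w \<noteq> u \<and> c w = u}"
        using centre[of u] by simp
      then show False using u by simp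
    qed
    then have "(\<Sum>u\<in>N. x u) = x (c v) + (\<Sum>u\<in>N - {c v}. 1)"
      using finN cN by (simp add: sum.remove x_def)
    also have "\<dots> = - real r + (real r - 1)"
      using leaf[OF v False] finN cN cardN card_gt_0_iff[of N] by (auto simp: x_def of_nat_diff)
    finally show ?thesis
      using False by (simp add: N_def x_def)
  qed
qed

theorem mainTheorem12:
  fixes n r :: nat and E :: "nat \<Rightarrow> nat \<Rightarrow> bool"
  assumes "r \<ge> 1" and "n \<ge> 1"
    and "simple_graph n E"
    and "regular_graph n E r"
    and "perfect_star_packing n E r"
  shows "eigenvalue (adjacency_matrix n E) (-1)"
proof -
  obtain c where c: "star_centre_map n E c"
    using perfect_star_packing_star_centre_map[OF assms(3-5)] by blast
  define x where "x u = (if c u = u then - real r else 1)" for u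
  show ?thesis
  proof (rule eigenvalue_adjacency_matrixI)
    show "0 < n" and "x 0 \<noteq> 0"
      using assms(1,2) by (auto simp: x_def)
    show "(\<Sum>j | j < n \<and> E i j. x j) = - 1 * x i" if "i < n" for i
      using star_centre_map_weights_neighbour_sum[OF assms(3,4) c that] by (simp add: x_def)
  qed
qed

end
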